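(* Let $a\in\mathbb{R}$, $\alpha\in(0,1]$, $\sigma_r^2,\sigma_w^2\ge0$. For a symmetric doubly stochastic $N\times N$ matrix $P$ with eigenvalues $\lambda_1(P),\dots,\lambda_N(P)$ such that $Q=a(P-\alpha I_N)$ has spectral radius $<1$, set $$\hat{\mathrm{MSD}}(P,\alpha)=R_{MSD}(\alpha)+\frac1N\sum_{i=1}^N\frac{a^2\alpha^2\sigma_w^2}{1-a^2(\lambda_i(P)-\alpha)^2},\quad \tilde{\mathrm{MSD}}(P,\alpha)=R_{MSD}(\alpha)+\frac1N\sum_{i=1}^N\frac{a^2\alpha^2\sigma_w^2\lambda_i^2(P)}{1-a^2(\lambda_i(P)-\alpha)^2},$$ with $R_{MSD}(\alpha)=\sigma_r^2/(1-a^2(1-\alpha)^2)$ (these are the steady-state mean square deviations of the two estimators $\hat{x}_{i,t+1}=a(\sum_j p_{ij}\hat{x}_{j,t}+\alpha(y_{i,t}-\hat{x}_{i,t}))$ and $\tilde{x}_{i,t+1}=a(\sum_jp_{ij}\tilde{x}_{j,t}+\alpha(\sum_jp_{ij}y_{j,t}-\tilde{x}_{i,t}))$ for the model $x_{t+1}=ax_t+r_t$, $y_{i,t}=x_t+w_{i,t}$ with innovation variance $\sigma_r^2$ and observation noise variance $\sigma_w^2$). Let $L_{K_N}$, $L_{S_N}$, $L_{C_N}$ be the Laplacians of the complete graph, the star graph and the cycle graph on $N$ vertices. Then: (a) If $|a|(1-\alpha)<1$ and $P=I-\frac{1-\alpha}{N}L_{K_N}$, then $\lim_{N\to\infty}\hat{\mathrm{MSD}}(P,\alpha)=R_{MSD}(\alpha)+a^2\alpha^2\sigma_w^2$.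 (b) If $|a|(1-\alpha)<1$ and $P=I-\frac{1-\alpha}{N}L_{S_N}$, then $\lim_{N\to\infty}\hat{\mathrm{MSD}}(P,\alpha)=R_{MSD}(\alpha)+\dfrac{a^2\alpha^2\sigma_w^2}{1-a^2(1-\alpha)^2}$. (c) If $\beta\in(0,1/2)$ is a constant with $|a|\max\{1-\alpha,|1-4\beta-\alpha|\}<1$ and $P=I-\beta L_{C_N}$, then $$\lim_{N\to\infty}\hat{\mathrm{MSD}}(P,\alpha)=R_{MSD}(\alpha)+\int_0^{2\pi}\frac{a^2\alpha^2\sigma_w^2}{1-a^2\big(1-\beta(2-2\cos\tau)-\alpha\big)^2}\,\frac{d\tau}{2\pi}.$$ (d) If $|a|\max\{1-\alpha,\alpha\}<1$ and $P=I-\frac1NL_{K_N}$, then $\lim_{N\to\infty}\tilde{\mathrm{MSD}}(P,\alpha)=R_{MSD}(\alpha)$.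
   Context: The Laplacian of a graph is $L=D-A$ with $D$ the degree matrix and $A$ the adjacency matrix. The spectral radius conditions in each part are the requirement (for every $N$) that $\rho(a(P-\alpha I_N))<1$, under which the steady-state MSD is given by the displayed formulas. *)

theory Defs
  imports "HOL-Analysis.Analysis" "HOL-Library.Multiset"
    "Jordan_Normal_Form.Char_Poly" "Jordan_Normal_Form.Spectral_Radius"
begin

definition laplacian :: "nat \<Rightarrow> (nat \<Rightarrow> nat \<Rightarrow> bool) \<Rightarrow> real mat" where
  "laplacian N adj = mat N N (\<lambda>(i,j).
     (if i = j then real (card {k. k < N \<and> adj i k}) else 0) - (if adj i j then 1 else 0))"

definition complete_adj :: "nat \<Rightarrow> nat \<Rightarrow> nat \<Rightarrow> bool" where
  "complete_adj N i j \<longleftrightarrow> i \<noteq> j"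

definition star_adj :: "nat \<Rightarrow> nat \<Rightarrow> nat \<Rightarrow> bool" where
  "star_adj N i j \<longleftrightarrow> i \<noteq> j \<and> (i = 0 \<or> j = 0)"

definition cycle_adj :: "nat \<Rightarrow> nat \<Rightarrow> nat \<Rightarrow> bool" where
  "cycle_adj N i j \<longleftrightarrow> i \<noteq> j \<and> (j = (i + 1) mod N \<or> i = (j + 1) mod N)"

abbreviation L_K :: "nat \<Rightarrow> real mat" where "L_K N \<equiv> laplacian N (complete_adj N)"
abbreviation L_S :: "nat \<Rightarrow> real mat" where "L_S N \<equiv> laplacian N (star_adj N)"
abbreviation L_C :: "nat \<Rightarrow> real mat" where "L_C N \<equiv> laplacian N (cycle_adj N)"

text \<open>The eigenvalues (with multiplicity) of a real matrix whose characteristic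
  polynomial splits over the reals (e.g. a real symmetric matrix), as a multiset.\<close>
definition eigvals :: "real mat \<Rightarrow> real multiset" where
  "eigvals A = (SOME M. char_poly A = (\<Prod>x\<in>#M. [:- x, 1:]))"

definition R_MSD :: "real \<Rightarrow> real \<Rightarrow> real \<Rightarrow> real" where
  "R_MSD a \<alpha> \<sigma>r2 = \<sigma>r2 / (1 - a^2 * (1 - \<alpha>)^2)"

definition MSD_hat :: "real \<Rightarrow> real \<Rightarrow> real \<Rightarrow> real \<Rightarrow> real mat \<Rightarrow> real" where
  "MSD_hat a \<alpha> \<sigma>r2 \<sigma>w2 P = R_MSD a \<alpha> \<sigma>r2 +
     (1 / real (dim_row P)) * (\<Sum>e\<in>#eigvals P. a^2 * \<alpha>^2 * \<sigma>w2 / (1 - a^2 * (e - \<alpha>)^2))"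

definition MSD_tilde :: "real \<Rightarrow> real \<Rightarrow> real \<Rightarrow> real \<Rightarrow> real mat \<Rightarrow> real" where
  "MSD_tilde a \<alpha> \<sigma>r2 \<sigma>w2 P = R_MSD a \<alpha> \<sigma>r2 +
     (1 / real (dim_row P)) * (\<Sum>e\<in>#eigvals P. a^2 * \<alpha>^2 * \<sigma>w2 * e^2 / (1 - a^2 * (e - \<alpha>)^2))"

end

theory Submission
  imports Defs
begin

text \<open>All four limits come from explicit spectra. For \<open>P = I - c L\<close> with \<open>L\<close> the Laplacian of
  the complete or the star graph, the all-ones vector and the differences \<open>e\<^sub>j - e\<^sub>j\<^sub>+\<^sub>1\<close>
  are \<open>N - 1\<close> independent eigenvectors, and the trace supplies the last eigenvalue: the spectrum
  is \<open>1, 1 - cN, \<dots>, 1 - cN\<close> for \<open>K\<^sub>N\<close> and \<open>1, 1 - c, \<dots>, 1 - c, 1 - cN\<close> for \<open>S\<^sub>N\<close>.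
  With \<open>c = (1 - \<alpha>)/N\<close> or \<open>c = 1/N\<close> the normalised sums defining the MSD become
  explicit rational functions of \<open>N\<close>. For the cycle, \<open>P\<close> is circulant, so the DFT matrix
  diagonalises it with eigenvalues \<open>1 - \<beta>(2 - 2 cos (2\<pi>k/N))\<close>; the MSD is then a left
  Riemann sum of a continuous function on \<open>[0, 2\<pi>]\<close>, which converges to the integral.\<close>

definition mat_trace :: "'a::comm_ring_1 mat \<Rightarrow> 'a" where
  "mat_trace A = (\<Sum>i<dim_row A. A $$ (i,i))"

lemma mat_trace_mult_comm:
  fixes X Y :: "'a::comm_ring_1 mat"
  assumes "X \<in> carrier_mat n m" "Y \<in> carrier_mat m n"
  shows "mat_trace (X * Y) = mat_trace (Y * X)"
proof -
  have "mat_trace (X * Y) = (\<Sum>i<n. \<Sum>k<m. X $$ (i,k) * Y $$ (k,i))"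
    using assms by (simp add: mat_trace_def scalar_prod_def atLeast0LessThan)
  also have "\<dots> = (\<Sum>k<m. \<Sum>i<n. Y $$ (k,i) * X $$ (i,k))"
    by (subst sum.swap) (simp add: mult.commute)
  also have "\<dots> = mat_trace (Y * X)"
    using assms by (simp add: mat_trace_def scalar_prod_def atLeast0LessThan)
  finally show ?thesis .
qed

lemma mat_trace_conj:
  fixes A S S' :: "'a::comm_ring_1 mat"
  assumes A: "A \<in> carrier_mat n n" and S: "S \<in> carrier_mat n n" and S': "S' \<in> carrier_mat n n"
    and inv: "S * S' = 1\<^sub>m n"
  shows "mat_trace (S' * A * S) = mat_trace A"
proof -
  have "mat_trace (S' * A * S) = mat_trace (S' * (A * S))"
    using S S' A by (simp add: assoc_mult_mat[of _ n n _ n _ n])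
  also have "\<dots> = mat_trace (A * S * S')" by (rule mat_trace_mult_comm[of _ n n]) (use S S' A in auto)
  also have "\<dots> = mat_trace A" using inv S S' A by (simp add: assoc_mult_mat[of _ n n _ n _ n])
  finally show ?thesis .
qed

lemma conj_mat_eigenvector_entry:
  fixes A S S' :: "'a::field mat"
  assumes A: "A \<in> carrier_mat n n" and S: "S \<in> carrier_mat n n" and S': "S' \<in> carrier_mat n n"
    and inv: "S' * S = 1\<^sub>m n" and ev: "A *\<^sub>v col S j = d \<cdot>\<^sub>v col S j"
    and i: "i < n" and j: "j < n"
  shows "(S' * A * S) $$ (i,j) = (if i = j then d else 0)"
proof -
  have "col (S' * A * S) j = (S' * A) *\<^sub>v col S j" by (rule col_mult2) (use j S S' A in auto)
  also have "\<dots> = S' *\<^sub>v (A *\<^sub>v col S j)" using j S S' A by (simp add: assoc_mult_mat_vec)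
  also have "\<dots> = d \<cdot>\<^sub>v (S' *\<^sub>v col S j)" unfolding ev using S S' j by (simp add: mult_mat_vec)
  also have "S' *\<^sub>v col S j = col (S' * S) j" by (rule col_mult2[symmetric]) (use j S S' in auto)
  finally have "col (S' * A * S) j = d \<cdot>\<^sub>v unit_vec n j" using inv j by simp
  then show ?thesis using i j S S' A by (simp add: unit_vec_def flip: index_col)
qed

text \<open>The eigenvector columns make \<open>S\<^sup>-\<^sup>1 A S\<close> upper triangular.\<close>
lemma char_poly_conj_diag:
  fixes A S S' :: "'a::field mat"
  assumes A: "A \<in> carrier_mat n n" and S: "S \<in> carrier_mat n n" and S': "S' \<in> carrier_mat n n"
    and inv: "S' * S = 1\<^sub>m n" "S * S' = 1\<^sub>m n"
    and ev: "\<And>j. j < n - 1 \<Longrightarrow> A *\<^sub>v col S j = d j \<cdot>\<^sub>v col S j"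
  shows "char_poly A = (\<Prod>i<n. [:- (S' * A * S) $$ (i,i), 1:])"
proof -
  define T where "T = S' * A * S"
  have T: "T \<in> carrier_mat n n" using S S' A by (simp add: T_def)
  have "upper_triangular T"
    unfolding upper_triangular_def
  proof (intro allI impI)
    fix i j assume "i < dim_row T" "j < i"
    then show "T $$ (i,j) = 0"
      using conj_mat_eigenvector_entry[OF A S S' inv(1) ev[of j], of i] T by (auto simp: T_def)
  qed
  moreover have "S * T * S' = (S * S') * A * (S * S')"
    using S S' A by (simp add: T_def assoc_mult_mat[of _ n n _ n _ n])
  then have "A = S * T * S'" using A inv by simp
  then have "similar_mat A T"
    by (intro similar_matI[of _ _ S S' n]) (use S S' T inv in auto)
  ultimately have "char_poly A = (\<Prod>a\<leftarrow>diag_mat T. [:- a, 1:])"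
    using char_poly_similar char_poly_upper_triangular[OF T] by metis
  also have "\<dots> = (\<Prod>i<n. [:- T $$ (i,i), 1:])"
    unfolding diag_mat_def using T
    by (simp add: prod.distinct_set_conv_list[symmetric] atLeast0LessThan o_def)
  finally show ?thesis unfolding T_def .
qed

lemma char_poly_eigenbasis:
  fixes A S :: "'a::field mat"
  assumes A: "A \<in> carrier_mat n n" and S: "S \<in> carrier_mat n n" and "det S \<noteq> 0"
    and ev: "\<And>j. j < n \<Longrightarrow> A *\<^sub>v col S j = d j \<cdot>\<^sub>v col S j"
  shows "char_poly A = (\<Prod>i<n. [:- d i, 1:])"
proof -
  obtain S' where S': "S' \<in> carrier_mat n n" and inv: "S' * S = 1\<^sub>m n" "S * S' = 1\<^sub>m n"
    using det_non_zero_imp_unit[OF S \<open>det S \<noteq> 0\<close>] by (auto simp: Units_def ring_mat_def)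
  have "char_poly A = (\<Prod>i<n. [:- (S' * A * S) $$ (i,i), 1:])"
    by (rule char_poly_conj_diag[OF A S S' inv]) (rule ev, simp)
  also have "\<dots> = (\<Prod>i<n. [:- d i, 1:])"
    using conj_mat_eigenvector_entry[OF A S S' inv(1) ev] by (intro prod.cong) simp_all
  finally show ?thesis .
qed

lemma char_poly_eigenvectors_trace:
  fixes A S :: "'a::field mat"
  assumes A: "A \<in> carrier_mat n n" and S: "S \<in> carrier_mat n n" and "det S \<noteq> 0"
    and ev: "\<And>j. j < n - 1 \<Longrightarrow> A *\<^sub>v col S j = d j \<cdot>\<^sub>v col S j"
    and tr: "mat_trace A = (\<Sum>i<n. d i)"
  shows "char_poly A = (\<Prod>i<n. [:- d i, 1:])"
proof -
  obtain S' where S': "S' \<in> carrier_mat n n" and inv: "S' * S = 1\<^sub>m n" "S * S' = 1\<^sub>m n"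
    using det_non_zero_imp_unit[OF S \<open>det S \<noteq> 0\<close>] by (auto simp: Units_def ring_mat_def)
  define T where "T = S' * A * S"
  have diag: "T $$ (i,i) = d i" if "i < n - 1" for i
    using conj_mat_eigenvector_entry[OF A S S' inv(1) ev[of i], of i] that by (simp add: T_def)
  have "T $$ (i,i) = d i" if i: "i < n" for i
  proof (cases "i < n - 1")
    case False
    then have "i = n - 1" and "{..<n} = insert (n - 1) {..<n - 1}" using i by auto
    moreover have "mat_trace T = (\<Sum>i<n. T $$ (i,i))"
      using S S' A by (simp add: T_def mat_trace_def)
    moreover have "mat_trace T = mat_trace A"
      unfolding T_def by (rule mat_trace_conj[OF A S S' inv(2)])
    ultimately show ?thesis using tr diag by simp
  qed (rule diag)
  moreover have "char_poly A = (\<Prod>i<n. [:- T $$ (i,i), 1:])"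
    unfolding T_def by (rule char_poly_conj_diag[OF A S S' inv ev])
  ultimately show ?thesis by simp
qed

lemma proots_prod_linear_factors: "proots (\<Prod>x\<in>#M. [:- x, 1:]) = (M :: 'a::idom multiset)"
proof (induction M)
  case (add x M)
  have "(\<Prod>x\<in>#M. [:- x, 1:]) \<noteq> 0" by (auto simp: prod_mset_zero_iff)
  then have "proots ([:- x, 1:] * (\<Prod>x\<in>#M. [:- x, 1:])) = proots [:- x, 1:] + M"
    using add.IH by (subst proots_mult) auto
  also have "proots [:- x, 1:] = {#x#}" using proots_linear_factor[of "- x"] by simp
  finally show ?case by simp
qed simp

lemma eigvals_char_poly:
  assumes "char_poly A = (\<Prod>x\<in>#M. [:- x, 1:])"
  shows "eigvals A = M"
proof -
  have "char_poly A = (\<Prod>x\<in>#eigvals A. [:- x, 1:])"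
    unfolding eigvals_def by (rule someI[where x = M]) (rule assms)
  then show ?thesis using assms by (metis proots_prod_linear_factors)
qed

lemma sum_eigvals:
  assumes "char_poly A = (\<Prod>i<n. [:- d i, 1:])"
  shows "(\<Sum>e\<in>#eigvals A. f e) = (\<Sum>i<n. f (d i))"
proof -
  have "eigvals A = image_mset d (mset_set {..<n})"
    using assms by (intro eigvals_char_poly) (simp add: prod_unfold_prod_mset image_mset.compositionality o_def)
  then show ?thesis by (simp add: sum_unfold_sum_mset image_mset.compositionality o_def)
qed

definition diff_basis :: "nat \<Rightarrow> 'a::field mat" where
  "diff_basis N = mat N N (\<lambda>(i,j).
     if j = 0 then 1
     else if j = N - 1 then (if i = N - 1 then 1 else 0)
     else if i = j then 1 else if i = j + 1 then -1 else 0)"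

lemma det_diff_basis: "det (diff_basis N) = 1"
proof -
  have "det (diff_basis N) = prod_list (diag_mat (diff_basis N))"
    by (rule det_lower_triangular[of N]) (auto simp: diff_basis_def)
  also have "\<dots> = 1" unfolding diag_mat_def diff_basis_def by (rule prod_list_neutral) auto
  finally show ?thesis .
qed

lemma sum_mult_diff_delta:
  fixes g :: "nat \<Rightarrow> 'a::ring_1"
  assumes "j + 1 < N"
  shows "(\<Sum>k<N. g k * (if k = j then 1 else if k = j + 1 then -1 else 0)) = g j - g (j + 1)"
proof -
  have "(\<Sum>k<N. g k * (if k = j then 1 else if k = j + 1 then -1 else 0))
      = (\<Sum>k<N. if k = j then g k else 0) - (\<Sum>k<N. if k = j + 1 then g k else 0)"
    by (subst sum_subtractf[symmetric], rule sum.cong) auto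
  then show ?thesis using assms by simp
qed

text \<open>Hypothesis \<open>diff\<close> says that \<open>e\<^sub>j - e\<^sub>j\<^sub>+\<^sub>1\<close> is an eigenvector of \<open>A\<close> for \<open>\<mu>\<close>.\<close>
lemma char_poly_diff_basis:
  fixes A :: "'a::field mat"
  assumes A: "A \<in> carrier_mat N N" and N: "2 \<le> N"
    and row_sum: "\<And>i. i < N \<Longrightarrow> (\<Sum>k<N. A $$ (i,k)) = 1"
    and diff: "\<And>i j. 1 \<le> j \<Longrightarrow> j + 1 < N \<Longrightarrow> i < N \<Longrightarrow>
        A $$ (i,j) - A $$ (i,j+1) = \<mu> * (if i = j then 1 else if i = j + 1 then -1 else 0)"
    and tr: "mat_trace A = 1 + of_nat (N - 2) * \<mu> + t"
  shows "char_poly A = (\<Prod>i<N. [:- (if i = 0 then 1 else if i = N - 1 then t else \<mu>), 1:])"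
proof (rule char_poly_eigenvectors_trace[OF A])
  let ?S = "diff_basis N :: 'a mat" and ?d = "\<lambda>i. if i = 0 then 1 else if i = N - 1 then t else \<mu>"
  show "?S \<in> carrier_mat N N" by (simp add: diff_basis_def)
  show "det ?S \<noteq> 0" by (simp add: det_diff_basis)
  show "A *\<^sub>v col ?S j = ?d j \<cdot>\<^sub>v col ?S j" if j: "j < N - 1" for j
  proof (rule eq_vecI)
    fix i assume "i < dim_vec (?d j \<cdot>\<^sub>v col ?S j)"
    then have i: "i < N" by (simp add: diff_basis_def)
    have "(A *\<^sub>v col ?S j) $ i = (\<Sum>k<N. A $$ (i,k) * ?S $$ (k,j))"
      using A i j by (simp add: scalar_prod_def atLeast0LessThan diff_basis_def)
    also have "\<dots> = ?d j * ?S $$ (i,j)"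
    proof (cases "j = 0")
      case True
      then have "(\<Sum>k<N. A $$ (i,k) * ?S $$ (k,j)) = (\<Sum>k<N. A $$ (i,k))"
        by (intro sum.cong) (auto simp: diff_basis_def)
      then show ?thesis using row_sum[OF i] True i by (simp add: diff_basis_def)
    next
      case False
      then have "(\<Sum>k<N. A $$ (i,k) * ?S $$ (k,j))
          = (\<Sum>k<N. A $$ (i,k) * (if k = j then 1 else if k = j + 1 then -1 else 0))"
        using j by (intro sum.cong) (auto simp: diff_basis_def)
      also have "\<dots> = A $$ (i,j) - A $$ (i,j+1)" using j by (intro sum_mult_diff_delta) auto
      also have "\<dots> = \<mu> * (if i = j then 1 else if i = j + 1 then -1 else 0)"
        using diff[of j i] False j i by auto
      finally show ?thesis using False j i by (simp add: diff_basis_def)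
    qed
    finally show "(A *\<^sub>v col ?S j) $ i = (?d j \<cdot>\<^sub>v col ?S j) $ i"
      using i j by (simp add: diff_basis_def)
  qed (use A in \<open>simp add: diff_basis_def\<close>)
  have "{..<N} = insert 0 (insert (N - 1) {1..<N - 1})" using N by auto
  then show "mat_trace A = (\<Sum>i<N. ?d i)" using N tr by (simp add: add.commute)
qed

lemma sum_lessThan_if_eq:
  fixes a b :: "'a::ring_1"
  assumes "i < N"
  shows "(\<Sum>k<N. if i = k then a else b) = a + of_nat (N - 1) * b"
proof -
  have "(\<Sum>k<N. if i = k then a else b) = (\<Sum>k<N. b + (if k = i then a - b else 0))"
    by (intro sum.cong) auto
  also have "\<dots> = of_nat N * b + (a - b)" using assms by (simp add: sum.distrib)
  finally show ?thesis using assms by (simp add: of_nat_diff algebra_simps)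
qed

lemma laplacian_carrier: "laplacian N adj \<in> carrier_mat N N"
  unfolding laplacian_def by (rule mat_carrier)

lemma laplacian_dim [simp]: "dim_row (laplacian N adj) = N" "dim_col (laplacian N adj) = N"
  by (simp_all add: laplacian_def)

lemma id_minus_laplacian_carrier: "1\<^sub>m N - c \<cdot>\<^sub>m laplacian N adj \<in> carrier_mat N N"
  by (rule minus_carrier_mat) (use laplacian_carrier in auto)

lemma id_minus_laplacian_entry:
  assumes "i < N" "j < N"
  shows "(1\<^sub>m N - c \<cdot>\<^sub>m laplacian N adj) $$ (i,j) = (if i = j then 1 else 0) -
     c * ((if i = j then real (card {k. k < N \<and> adj i k}) else 0) - (if adj i j then 1 else 0))"
  using assms by (simp add: laplacian_def)

lemma complete_entry:
  assumes "i < N" "j < N"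
  shows "(1\<^sub>m N - c \<cdot>\<^sub>m L_K N) $$ (i,j) = (if i = j then 1 - c * real (N - 1) else c)"
proof -
  have "{k. k < N \<and> complete_adj N i k} = {..<N} - {i}" by (auto simp: complete_adj_def)
  then have deg: "card {k. k < N \<and> complete_adj N i k} = N - 1" using assms by simp
  show ?thesis unfolding id_minus_laplacian_entry[OF assms] deg by (simp add: complete_adj_def)
qed

lemma star_entry:
  assumes "i < N" "j < N"
  shows "(1\<^sub>m N - c \<cdot>\<^sub>m L_S N) $$ (i,j) =
    (if i = j then (if i = 0 then 1 - c * real (N - 1) else 1 - c)
     else if i = 0 \<or> j = 0 then c else 0)"
proof -
  have "{k. k < N \<and> star_adj N i k} = (if i = 0 then {..<N} - {0} else {0})"
    using assms by (auto simp: star_adj_def)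
  then have deg: "card {k. k < N \<and> star_adj N i k} = (if i = 0 then N - 1 else 1)"
    using assms by simp
  show ?thesis unfolding id_minus_laplacian_entry[OF assms] deg by (simp add: star_adj_def)
qed

lemma char_poly_complete:
  assumes N: "2 \<le> N"
  shows "char_poly (1\<^sub>m N - c \<cdot>\<^sub>m L_K N) = (\<Prod>i<N. [:- (if i = 0 then 1 else 1 - c * real N), 1:])"
proof -
  let ?A = "1\<^sub>m N - c \<cdot>\<^sub>m L_K N"
  have "char_poly ?A =
      (\<Prod>i<N. [:- (if i = 0 then 1 else if i = N - 1 then 1 - c * real N else 1 - c * real N), 1:])"
  proof (rule char_poly_diff_basis[OF id_minus_laplacian_carrier N])
    fix i assume i: "i < N"
    have "(\<Sum>k<N. ?A $$ (i,k)) = (\<Sum>k<N. if i = k then 1 - c * real (N - 1) else c)"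
      using i by (intro sum.cong refl complete_entry) auto
    then show "(\<Sum>k<N. ?A $$ (i,k)) = 1" using i by (simp add: sum_lessThan_if_eq)
  next
    fix i j assume ij: "1 \<le> j" "j + 1 < N" "i < N"
    show "?A $$ (i,j) - ?A $$ (i,j+1) =
        (1 - c * real N) * (if i = j then 1 else if i = j + 1 then -1 else 0)"
      using complete_entry[of i N j c] complete_entry[of i N "j+1" c] ij N
      by (simp add: of_nat_diff algebra_simps)
  next
    have "mat_trace ?A = (\<Sum>i<N. 1 - c * real (N - 1))"
      unfolding mat_trace_def by (intro sum.cong trans[OF complete_entry]) auto
    then show "mat_trace ?A = 1 + real (N - 2) * (1 - c * real N) + (1 - c * real N)"
      using N by (simp add: of_nat_diff algebra_simps)
  qed
  then show ?thesis by (simp only: if_cancel)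
qed

lemma char_poly_star:
  assumes N: "2 \<le> N"
  shows "char_poly (1\<^sub>m N - c \<cdot>\<^sub>m L_S N) =
    (\<Prod>i<N. [:- (if i = 0 then 1 else if i = N - 1 then 1 - c * real N else 1 - c), 1:])"
proof (rule char_poly_diff_basis[OF id_minus_laplacian_carrier N])
  let ?A = "1\<^sub>m N - c \<cdot>\<^sub>m L_S N"
  fix i assume i: "i < N"
  show "(\<Sum>k<N. ?A $$ (i,k)) = 1"
  proof (cases "i = 0")
    case True
    have "(\<Sum>k<N. ?A $$ (i,k)) = (\<Sum>k<N. if i = k then 1 - c * real (N - 1) else c)"
      using i True by (intro sum.cong refl trans[OF star_entry]) auto
    then show ?thesis using i by (simp add: sum_lessThan_if_eq)
  next
    case False
    have "(\<Sum>k<N. ?A $$ (i,k)) = (\<Sum>k<N. (if k = i then 1 - c else 0) + (if k = 0 then c else 0))"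
      using i False by (intro sum.cong refl trans[OF star_entry]) auto
    then show ?thesis using i N by (simp add: sum.distrib)
  qed
next
  let ?A = "1\<^sub>m N - c \<cdot>\<^sub>m L_S N"
  fix i j assume ij: "1 \<le> j" "j + 1 < N" "i < N"
  show "?A $$ (i,j) - ?A $$ (i,j+1) = (1 - c) * (if i = j then 1 else if i = j + 1 then -1 else 0)"
    using star_entry[of i N j c] star_entry[of i N "j+1" c] ij by auto
next
  let ?A = "1\<^sub>m N - c \<cdot>\<^sub>m L_S N"
  have "mat_trace ?A = (\<Sum>i<N. if 0 = i then 1 - c * real (N - 1) else 1 - c)"
    unfolding mat_trace_def by (intro sum.cong trans[OF star_entry]) auto
  also have "\<dots> = 1 - c * real (N - 1) + real (N - 1) * (1 - c)"
    using N by (intro sum_lessThan_if_eq) simp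
  finally show "mat_trace ?A = 1 + real (N - 2) * (1 - c) + (1 - c * real N)"
    using N by (simp add: of_nat_diff algebra_simps)
qed

definition unit_root :: "nat \<Rightarrow> nat \<Rightarrow> complex" where
  "unit_root N m = cis (2 * pi * real m / real N)"

lemma unit_root_add: "unit_root N (m + k) = unit_root N m * unit_root N k"
  unfolding unit_root_def by (simp add: cis_mult add_divide_distrib distrib_left)

lemma unit_root_mult: "unit_root N (m * k) = unit_root N m ^ k"
  unfolding unit_root_def Complex.DeMoivre by (rule arg_cong[where f = cis]) (simp add: algebra_simps)

lemma unit_root_eq_iff:
  assumes "0 < N"
  shows "unit_root N m = unit_root N k \<longleftrightarrow> m mod N = k mod N"
proof -
  have "unit_root N j = exp (2 * of_real pi * \<i> * of_nat j / of_nat N)" for j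
    unfolding unit_root_def cis_conv_exp by (simp add: field_simps)
  then show ?thesis using complex_root_unity_eq[of N m k] assms by simp
qed

lemma unit_root_mod: "0 < N \<Longrightarrow> unit_root N (m mod N) = unit_root N m"
  by (simp add: unit_root_eq_iff)

lemma unit_root_pow_N:
  assumes "0 < N"
  shows "unit_root N m ^ N = 1"
proof -
  have "unit_root N m ^ N = unit_root N ((m * N) mod N)"
    using assms by (simp only: unit_root_mod unit_root_mult)
  then show ?thesis by (simp add: unit_root_def)
qed

lemma unit_root_plus_inverse:
  "unit_root N m + inverse (unit_root N m) = complex_of_real (2 * cos (2 * pi * real m / real N))"
  unfolding unit_root_def by (simp add: complex_eq_iff)

lemma unit_root_mod_mult:
  assumes "0 < N"
  shows "unit_root N (((i + s) mod N) * k) = unit_root N (i * k) * unit_root N (s * k)"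
  using assms by (simp add: unit_root_eq_iff mod_mult_left_eq flip: unit_root_add add_mult_distrib)

lemma unit_root_pred_mult:
  assumes N: "0 < N"
  shows "unit_root N ((N - 1) * k) = inverse (unit_root N k)"
proof -
  have "unit_root N ((N - 1) * k) * unit_root N k = unit_root N k ^ Suc (N - 1)"
    unfolding mult.commute[of "N - 1" k] unit_root_mult by (rule power_Suc2[symmetric])
  then have "unit_root N ((N - 1) * k) * unit_root N k = 1" using N unit_root_pow_N[OF N] by simp
  then show ?thesis by (metis inverse_unique mult.commute)
qed

definition dft_mat :: "nat \<Rightarrow> complex mat" where
  "dft_mat N = mat N N (\<lambda>(j,k). unit_root N (j * k))"

lemma dft_mat_mult_inverse_entries:
  assumes N: "0 < N"
  shows "dft_mat N * mat N N (\<lambda>(j,l). inverse (unit_root N (j * l))) = of_nat N \<cdot>\<^sub>m 1\<^sub>m N"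
proof (rule eq_matI)
  fix i l assume "i < dim_row (of_nat N \<cdot>\<^sub>m 1\<^sub>m N :: complex mat)" "l < dim_col (of_nat N \<cdot>\<^sub>m 1\<^sub>m N :: complex mat)"
  then have i: "i < N" and l: "l < N" by auto
  define z where "z = unit_root N i / unit_root N l"
  have "(dft_mat N * mat N N (\<lambda>(j,l). inverse (unit_root N (j * l)))) $$ (i,l)
      = (\<Sum>j<N. unit_root N (i * j) * inverse (unit_root N (j * l)))"
    using i l by (simp add: dft_mat_def scalar_prod_def atLeast0LessThan)
  also have "\<dots> = (\<Sum>j<N. z ^ j)"
  proof (intro sum.cong refl)
    fix j
    show "unit_root N (i * j) * inverse (unit_root N (j * l)) = z ^ j"
      unfolding mult.commute[of j l] unit_root_mult z_def power_divide by (simp add: divide_inverse)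
  qed
  also have "\<dots> = (of_nat N \<cdot>\<^sub>m 1\<^sub>m N) $$ (i,l)"
  proof (cases "i = l")
    case True
    then show ?thesis using i by (simp add: z_def unit_root_def)
  next
    case False
    then have "z \<noteq> 1" using unit_root_eq_iff[OF N, of i l] i l by (simp add: z_def unit_root_def)
    moreover have "z ^ N = 1" using N by (simp add: z_def power_divide unit_root_pow_N)
    ultimately show ?thesis using False i l by (simp add: sum_gp_strict)
  qed
  finally show "(dft_mat N * mat N N (\<lambda>(j,l). inverse (unit_root N (j * l)))) $$ (i,l)
      = (of_nat N \<cdot>\<^sub>m 1\<^sub>m N) $$ (i,l)" .
qed (auto simp: dft_mat_def)

lemma det_dft_mat: assumes "0 < N" shows "det (dft_mat N) \<noteq> 0"
proof -
  let ?D' = "mat N N (\<lambda>(j,l). inverse (unit_root N (j * l)))"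
  have "det (dft_mat N) * det ?D' = det (of_nat N \<cdot>\<^sub>m 1\<^sub>m N :: complex mat)"
    unfolding dft_mat_mult_inverse_entries[OF assms, symmetric]
    by (rule det_mult[symmetric]) (auto simp: dft_mat_def)
  also have "\<dots> \<noteq> 0" using assms by simp
  finally show ?thesis by auto
qed

lemma Suc_mod_eq_if:
  assumes "(i::nat) < N"
  shows "(i + 1) mod N = (if i + 1 < N then i + 1 else 0)"
proof (cases "i + 1 < N")
  case False
  with assms have "i + 1 = N" by simp
  then show ?thesis by simp
qed simp

lemma pred_mod_eq_if:
  assumes "(i::nat) < N"
  shows "(i + N - 1) mod N = (if 1 \<le> i then i - 1 else N - 1)"
proof (cases "1 \<le> i")
  case True
  then have "i + N - 1 = (i - 1) + N" by arith
  then show ?thesis using True assms by (simp only: mod_add_self2) simp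
qed (use assms in simp)

lemma cycle_adj_iff:
  assumes "i < N" "k < N" "3 \<le> N"
  shows "cycle_adj N i k \<longleftrightarrow> k = (i + 1) mod N \<or> k = (i + N - 1) mod N"
  using assms unfolding cycle_adj_def Suc_mod_eq_if[OF assms(1)] Suc_mod_eq_if[OF assms(2)]
    pred_mod_eq_if[OF assms(1)]
  by auto

lemma cycle_neighbours:
  assumes "(i::nat) < N" "3 \<le> N"
  shows "(i + 1) mod N \<noteq> i" "(i + N - 1) mod N \<noteq> i" "(i + 1) mod N \<noteq> (i + N - 1) mod N"
    "(i + N - 1) mod N < N"
  using assms unfolding Suc_mod_eq_if[OF assms(1)] pred_mod_eq_if[OF assms(1)] by auto

lemma cycle_entry:
  assumes "i < N" "j < N" "3 \<le> N"
  shows "(1\<^sub>m N - \<beta> \<cdot>\<^sub>m L_C N) $$ (i,j) = (if j = i then 1 - 2 * \<beta> else 0)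
     + (if j = (i + 1) mod N then \<beta> else 0) + (if j = (i + N - 1) mod N then \<beta> else 0)"
proof -
  have "{k. k < N \<and> cycle_adj N i k} = {(i + 1) mod N, (i + N - 1) mod N}"
    using cycle_adj_iff[OF assms(1) _ assms(3)] cycle_neighbours[OF assms(1,3)] by auto
  then have deg: "card {k. k < N \<and> cycle_adj N i k} = 2"
    using cycle_neighbours[OF assms(1,3)] by simp
  show ?thesis
    unfolding id_minus_laplacian_entry[OF assms(1,2)] deg cycle_adj_iff[OF assms]
    using cycle_neighbours[OF assms(1,3)] by auto
qed

text \<open>The columns of the DFT matrix are the eigenvectors of every circulant matrix.\<close>
lemma cycle_dft_eigenvector:
  assumes N: "3 \<le> N" and k: "k < N"
  shows "map_mat complex_of_real (1\<^sub>m N - \<beta> \<cdot>\<^sub>m L_C N) *\<^sub>v col (dft_mat N) k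
    = complex_of_real (1 - \<beta> * (2 - 2 * cos (2 * pi * real k / real N))) \<cdot>\<^sub>v col (dft_mat N) k"
    (is "?A *\<^sub>v _ = complex_of_real ?\<nu> \<cdot>\<^sub>v _")
proof (rule eq_vecI)
  let ?P = "1\<^sub>m N - \<beta> \<cdot>\<^sub>m L_C N"
  let ?u = "unit_root N"
  have N0: "0 < N" using N by simp
  fix i assume "i < dim_vec (complex_of_real ?\<nu> \<cdot>\<^sub>v col (dft_mat N) k)"
  then have i: "i < N" by (simp add: dft_mat_def)
  have "(?A *\<^sub>v col (dft_mat N) k) $ i = (\<Sum>j<N. complex_of_real (?P $$ (i,j)) * ?u (j * k))"
    using id_minus_laplacian_carrier i k by (simp add: scalar_prod_def atLeast0LessThan dft_mat_def)
  also have "\<dots> = (\<Sum>j<N. ((if j = i then complex_of_real (1 - 2 * \<beta>) else 0)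
      + (if j = (i + 1) mod N then complex_of_real \<beta> else 0)
      + (if j = (i + N - 1) mod N then complex_of_real \<beta> else 0)) * ?u (j * k))"
    by (intro sum.cong refl) (subst cycle_entry[OF i _ N]; simp)
  also have "\<dots> = complex_of_real (1 - 2 * \<beta>) * ?u (i * k) + complex_of_real \<beta> * ?u (((i + 1) mod N) * k)
      + complex_of_real \<beta> * ?u (((i + (N - 1)) mod N) * k)"
    using i cycle_neighbours[OF i N]
    by (simp add: distrib_right sum.distrib if_distrib[of "\<lambda>y. y * _"] cong: if_cong)
  also have "\<dots> = ?u (i * k) * (complex_of_real (1 - 2 * \<beta>) + complex_of_real \<beta> * (?u k + inverse (?u k)))"
    unfolding unit_root_mod_mult[OF N0] unit_root_pred_mult[OF N0] by (simp add: algebra_simps)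
  also have "\<dots> = complex_of_real ?\<nu> * ?u (i * k)"
    unfolding unit_root_plus_inverse by (simp add: algebra_simps)
  finally show "(?A *\<^sub>v col (dft_mat N) k) $ i = (complex_of_real ?\<nu> \<cdot>\<^sub>v col (dft_mat N) k) $ i"
    using i k by (simp add: dft_mat_def)
qed (simp add: dft_mat_def)

interpretation of_real_poly_hom: map_poly_inj_idom_hom "of_real :: real \<Rightarrow> complex" ..

lemma char_poly_cycle:
  assumes N: "3 \<le> N"
  shows "char_poly (1\<^sub>m N - \<beta> \<cdot>\<^sub>m L_C N) =
     (\<Prod>k<N. [:- (1 - \<beta> * (2 - 2 * cos (2 * pi * real k / real N))), 1:])"
    (is "char_poly ?P = (\<Prod>k<N. [:- ?\<nu> k, 1:])")
proof -
  have P: "?P \<in> carrier_mat N N" by (rule id_minus_laplacian_carrier)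
  have "map_poly complex_of_real (char_poly ?P) = char_poly (map_mat complex_of_real ?P)"
    by (rule of_real_hom.char_poly_hom[symmetric, OF P])
  also have "\<dots> = (\<Prod>k<N. [:- complex_of_real (?\<nu> k), 1:])"
    using N P by (intro char_poly_eigenbasis[OF _ _ det_dft_mat cycle_dft_eigenvector])
      (auto simp: dft_mat_def)
  also have "\<dots> = map_poly complex_of_real (\<Prod>k<N. [:- ?\<nu> k, 1:])"
    by (simp add: of_real_poly_hom.hom_prod)
  finally show ?thesis by (rule of_real_poly_hom.injectivity)
qed

lemma integral_left_endpoint_error:
  fixes f :: "real \<Rightarrow> real"
  assumes cont: "continuous_on {a..b} f" and ab: "a \<le> b"
    and close: "\<And>t. t \<in> {a..b} \<Longrightarrow> \<bar>f t - f a\<bar> \<le> B"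
  shows "\<bar>integral {a..b} f - (b - a) * f a\<bar> \<le> B * (b - a)"
proof -
  have "integral {a..b} (\<lambda>t. f t - f a) = integral {a..b} f - (b - a) * f a"
    using cont ab by (subst integral_diff) (auto intro: integrable_continuous_real)
  moreover have "norm (integral {a..b} (\<lambda>t. f t - f a)) \<le> B * (b - a)"
    by (rule integral_bound[OF ab]) (use cont close in \<open>auto intro!: continuous_intros\<close>)
  ultimately show ?thesis by simp
qed

lemma integral_uniform_partition:
  fixes f :: "real \<Rightarrow> real"
  assumes cont: "continuous_on {0..L} f" and L: "0 \<le> L" and N: "0 < N"
  shows "integral {0..L} f = (\<Sum>k<N. integral {L * real k / real N..L * real (Suc k) / real N} f)"
proof -
  define x where "x = (\<lambda>k::nat. L * real k / real N)"
  define G where "G = (\<lambda>t. integral {0..t} f)"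
  have x_mono: "x k \<le> x (Suc k)" for k
    using L by (auto simp: x_def intro!: divide_right_mono mult_left_mono)
  have x_range: "0 \<le> x k" "x k \<le> L" if "k \<le> N" for k
    using that L N by (auto simp: x_def field_simps mult_left_mono)
  have "G (x (Suc k)) - G (x k) = integral {x k..x (Suc k)} f" if "k < N" for k
  proof -
    have "f integrable_on {0..x (Suc k)}"
      using x_range[of "Suc k"] that by (intro integrable_continuous_real continuous_on_subset[OF cont]) auto
    then have "integral {0..x k} f + integral {x k..x (Suc k)} f = integral {0..x (Suc k)} f"
      by (rule Henstock_Kurzweil_Integration.integral_combine[rotated 2]) (use x_range[of k] x_mono that in auto)
    then show ?thesis by (simp add: G_def)
  qed
  then have "(\<Sum>k<N. G (x (Suc k)) - G (x k)) = (\<Sum>k<N. integral {x k..x (Suc k)} f)"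
    by (intro sum.cong) auto
  moreover have "(\<Sum>k<N. G (x (Suc k)) - G (x k)) = integral {0..L} f"
    unfolding sum_lessThan_telescope[of "\<lambda>k. G (x k)"] using N by (simp add: G_def x_def)
  ultimately show ?thesis by (simp add: x_def)
qed

lemma riemann_sum_tendsto_integral:
  fixes f :: "real \<Rightarrow> real"
  assumes cont: "continuous_on {0..L} f" and L: "0 < L"
  shows "(\<lambda>N. L / real N * (\<Sum>k<N. f (L * real k / real N))) \<longlonglongrightarrow> integral {0..L} f"
proof (rule LIMSEQ_I)
  fix r :: real assume r: "0 < r"
  obtain d where d: "0 < d" and dd: "\<And>s t. s \<in> {0..L} \<Longrightarrow> t \<in> {0..L} \<Longrightarrow> dist t s < d \<Longrightarrow>
      dist (f t) (f s) < r / (2 * L)"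
    using compact_uniformly_continuous[OF cont compact_Icc] r L
    unfolding uniformly_continuous_on_def by (metis divide_pos_pos mult_pos_pos zero_less_numeral)
  obtain M :: nat where M: "L / d < real M" using reals_Archimedean2 by blast
  show "\<exists>no. \<forall>N\<ge>no. norm (L / real N * (\<Sum>k<N. f (L * real k / real N)) - integral {0..L} f) < r"
  proof (intro exI allI impI)
    fix N assume NM: "Suc M \<le> N"
    then have N: "0 < N" by simp
    define h where "h = L / real N"
    define x where "x = (\<lambda>k::nat. L * real k / real N)"
    have "L / d < real N" using M NM by linarith
    then have h: "0 < h" "h < d" using L N d by (auto simp: h_def field_simps)
    have x_Suc: "x (Suc k) = x k + h" for k by (simp add: x_def h_def distrib_left add_divide_distrib)
    have x_range: "x k \<in> {0..L}" if "k \<le> N" for k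
      using that L N by (auto simp: x_def field_simps mult_left_mono)
    have piece: "\<bar>integral {x k..x (Suc k)} f - h * f (x k)\<bar> \<le> r / (2 * L) * h" if k: "k < N" for k
    proof -
      have sub: "{x k..x (Suc k)} \<subseteq> {0..L}" using x_range[of k] x_range[of "Suc k"] k by auto
      have "\<bar>integral {x k..x (Suc k)} f - (x (Suc k) - x k) * f (x k)\<bar> \<le> r / (2 * L) * (x (Suc k) - x k)"
      proof (rule integral_left_endpoint_error[OF continuous_on_subset[OF cont sub]])
        fix t assume t: "t \<in> {x k..x (Suc k)}"
        then have "dist (f t) (f (x k)) < r / (2 * L)"
          using dd[of "x k" t] sub x_range[of k] k x_Suc h by (auto simp: dist_real_def)
        then show "\<bar>f t - f (x k)\<bar> \<le> r / (2 * L)" by (simp add: dist_real_def)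
      qed (use x_Suc h in simp)
      then show ?thesis using x_Suc by simp
    qed
    have "\<bar>(\<Sum>k<N. h * f (x k)) - integral {0..L} f\<bar>
        = \<bar>\<Sum>k<N. integral {x k..x (Suc k)} f - h * f (x k)\<bar>"
      unfolding integral_uniform_partition[OF cont less_imp_le[OF L] N]
      by (simp add: x_def sum_subtractf abs_minus_commute)
    also have "\<dots> \<le> (\<Sum>k<N. r / (2 * L) * h)" by (intro order.trans[OF sum_abs] sum_mono piece) simp
    also have "\<dots> < r" using N L r by (simp add: h_def)
    finally show "norm (L / real N * (\<Sum>k<N. f (L * real k / real N)) - integral {0..L} f) < r"
      by (simp add: h_def x_def sum_distrib_left)
  qed
qed

lemma square_lt_one_if_between:
  fixes a y lo hi :: real
  assumes "lo \<le> y" "y \<le> hi" and bound: "\<bar>a\<bar> * max hi \<bar>lo\<bar> < 1"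
  shows "a^2 * y^2 < 1"
proof -
  have "\<bar>y\<bar> \<le> max hi \<bar>lo\<bar>" using assms(1,2) by linarith
  then have "\<bar>a * y\<bar> < 1"
    using bound mult_left_mono[of "\<bar>y\<bar>" "max hi \<bar>lo\<bar>" "\<bar>a\<bar>"] by (simp add: abs_mult)
  then have "(a * y)^2 < 1" by (simp add: abs_square_less_1)
  then show ?thesis by (simp add: power_mult_distrib)
qed

lemma MSD_hat_complete_tendsto:
  "(\<lambda>N. MSD_hat a \<alpha> \<sigma>r2 \<sigma>w2 (1\<^sub>m N - ((1 - \<alpha>) / real N) \<cdot>\<^sub>m L_K N))
     \<longlonglongrightarrow> R_MSD a \<alpha> \<sigma>r2 + a^2 * \<alpha>^2 * \<sigma>w2"
proof -
  define C where "C = a^2 * \<alpha>^2 * \<sigma>w2"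
  define g where "g = (\<lambda>e. a^2 * \<alpha>^2 * \<sigma>w2 / (1 - a^2 * (e - \<alpha>)^2))"
  have eq: "MSD_hat a \<alpha> \<sigma>r2 \<sigma>w2 (1\<^sub>m N - ((1 - \<alpha>) / real N) \<cdot>\<^sub>m L_K N)
      = R_MSD a \<alpha> \<sigma>r2 + C + (g 1 - C) / real N" if N: "2 \<le> N" for N
  proof -
    have "(\<Sum>e\<in>#eigvals (1\<^sub>m N - ((1 - \<alpha>) / real N) \<cdot>\<^sub>m L_K N). g e)
        = (\<Sum>i<N. if 0 = i then g 1 else C)"
      unfolding sum_eigvals[OF char_poly_complete[OF N]] using N by (intro sum.cong) (auto simp: g_def C_def)
    also have "\<dots> = g 1 + real (N - 1) * C" using N by (intro sum_lessThan_if_eq) simp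
    finally have S: "(\<Sum>e\<in>#eigvals (1\<^sub>m N - ((1 - \<alpha>) / real N) \<cdot>\<^sub>m L_K N). g e) = g 1 + real (N - 1) * C" .
    have "real (N - 1) = real N - 1" using N by (simp add: of_nat_diff)
    then show ?thesis unfolding MSD_hat_def g_def[symmetric] S using N by (simp add: field_simps)
  qed
  have "\<forall>\<^sub>F N in sequentially. R_MSD a \<alpha> \<sigma>r2 + C + (g 1 - C) / real N
      = MSD_hat a \<alpha> \<sigma>r2 \<sigma>w2 (1\<^sub>m N - ((1 - \<alpha>) / real N) \<cdot>\<^sub>m L_K N)"
    using eventually_ge_at_top[of 2] by eventually_elim (rule eq[symmetric])
  moreover have "(\<lambda>N. R_MSD a \<alpha> \<sigma>r2 + C + (g 1 - C) / real N) \<longlonglongrightarrow> R_MSD a \<alpha> \<sigma>r2 + C"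
    using tendsto_add[OF tendsto_const lim_const_over_n] by simp
  ultimately show ?thesis unfolding C_def by (rule Lim_transform_eventually[rotated])
qed

lemma MSD_tilde_complete_tendsto:
  "(\<lambda>N. MSD_tilde a \<alpha> \<sigma>r2 \<sigma>w2 (1\<^sub>m N - (1 / real N) \<cdot>\<^sub>m L_K N)) \<longlonglongrightarrow> R_MSD a \<alpha> \<sigma>r2"
proof -
  define h where "h = (\<lambda>e. a^2 * \<alpha>^2 * \<sigma>w2 * e^2 / (1 - a^2 * (e - \<alpha>)^2))"
  have eq: "MSD_tilde a \<alpha> \<sigma>r2 \<sigma>w2 (1\<^sub>m N - (1 / real N) \<cdot>\<^sub>m L_K N) = R_MSD a \<alpha> \<sigma>r2 + h 1 / real N"
    if N: "2 \<le> N" for N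
  proof -
    have "(\<Sum>e\<in>#eigvals (1\<^sub>m N - (1 / real N) \<cdot>\<^sub>m L_K N). h e) = (\<Sum>i<N. if 0 = i then h 1 else 0)"
      unfolding sum_eigvals[OF char_poly_complete[OF N]] using N by (intro sum.cong) (auto simp: h_def)
    also have "\<dots> = h 1" using N by simp
    finally have S: "(\<Sum>e\<in>#eigvals (1\<^sub>m N - (1 / real N) \<cdot>\<^sub>m L_K N). h e) = h 1" .
    show ?thesis unfolding MSD_tilde_def h_def[symmetric] S by simp
  qed
  have "\<forall>\<^sub>F N in sequentially. R_MSD a \<alpha> \<sigma>r2 + h 1 / real N
      = MSD_tilde a \<alpha> \<sigma>r2 \<sigma>w2 (1\<^sub>m N - (1 / real N) \<cdot>\<^sub>m L_K N)"
    using eventually_ge_at_top[of 2] by eventually_elim (rule eq[symmetric])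
  moreover have "(\<lambda>N. R_MSD a \<alpha> \<sigma>r2 + h 1 / real N) \<longlonglongrightarrow> R_MSD a \<alpha> \<sigma>r2"
    using tendsto_add[OF tendsto_const lim_const_over_n] by simp
  ultimately show ?thesis by (rule Lim_transform_eventually[rotated])
qed

lemma MSD_hat_star_tendsto:
  assumes "\<bar>a\<bar> * (1 - \<alpha>) < 1" "\<alpha> \<le> 1"
  shows "(\<lambda>N. MSD_hat a \<alpha> \<sigma>r2 \<sigma>w2 (1\<^sub>m N - ((1 - \<alpha>) / real N) \<cdot>\<^sub>m L_S N))
     \<longlonglongrightarrow> R_MSD a \<alpha> \<sigma>r2 + a^2 * \<alpha>^2 * \<sigma>w2 / (1 - a^2 * (1 - \<alpha>)^2)"
proof -
  define g where "g = (\<lambda>e. a^2 * \<alpha>^2 * \<sigma>w2 / (1 - a^2 * (e - \<alpha>)^2))"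
  define \<mu> where "\<mu> = (\<lambda>N. 1 - (1 - \<alpha>) / real N)"
  have eq: "MSD_hat a \<alpha> \<sigma>r2 \<sigma>w2 (1\<^sub>m N - ((1 - \<alpha>) / real N) \<cdot>\<^sub>m L_S N)
      = R_MSD a \<alpha> \<sigma>r2 + (g 1 + g \<alpha>) / real N + (1 - 2 / real N) * g (\<mu> N)" if N: "2 \<le> N" for N
  proof -
    have "{..<N} = insert 0 (insert (N - 1) {1..<N - 1})" using N by auto
    then have S: "(\<Sum>e\<in>#eigvals (1\<^sub>m N - ((1 - \<alpha>) / real N) \<cdot>\<^sub>m L_S N). g e)
        = g 1 + g \<alpha> + real (N - 2) * g (\<mu> N)"
      unfolding sum_eigvals[OF char_poly_star[OF N]] using N by (simp add: \<mu>_def)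
    have "real (N - 2) = real N - 2" using N by (simp add: of_nat_diff)
    then show ?thesis unfolding MSD_hat_def g_def[symmetric] S using N by (simp add: field_simps)
  qed
  have ev: "\<forall>\<^sub>F N in sequentially. R_MSD a \<alpha> \<sigma>r2 + (g 1 + g \<alpha>) / real N + (1 - 2 / real N) * g (\<mu> N)
      = MSD_hat a \<alpha> \<sigma>r2 \<sigma>w2 (1\<^sub>m N - ((1 - \<alpha>) / real N) \<cdot>\<^sub>m L_S N)"
    using eventually_ge_at_top[of 2] by eventually_elim (rule eq[symmetric])
  have "a^2 * (1 - \<alpha>)^2 < 1"
    using square_lt_one_if_between[of "1 - \<alpha>" "1 - \<alpha>" "1 - \<alpha>" a] assms by simp
  moreover have "\<mu> \<longlonglongrightarrow> 1"
    unfolding \<mu>_def using tendsto_diff[OF tendsto_const lim_const_over_n, of 1 "1 - \<alpha>"] by simp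
  ultimately have "(\<lambda>N. g (\<mu> N)) \<longlonglongrightarrow> g 1"
    unfolding g_def by (intro tendsto_intros) auto
  then have "(\<lambda>N. R_MSD a \<alpha> \<sigma>r2 + (g 1 + g \<alpha>) / real N + (1 - 2 / real N) * g (\<mu> N))
      \<longlonglongrightarrow> R_MSD a \<alpha> \<sigma>r2 + 0 + (1 - 0) * g 1"
    by (intro tendsto_intros lim_const_over_n)
  from Lim_transform_eventually[OF this ev] show ?thesis by (simp add: g_def)
qed

lemma MSD_hat_cycle_tendsto:
  assumes "0 \<le> \<beta>" and bound: "\<bar>a\<bar> * max (1 - \<alpha>) \<bar>1 - 4 * \<beta> - \<alpha>\<bar> < 1"
  shows "(\<lambda>N. MSD_hat a \<alpha> \<sigma>r2 \<sigma>w2 (1\<^sub>m N - \<beta> \<cdot>\<^sub>m L_C N))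
     \<longlonglongrightarrow> R_MSD a \<alpha> \<sigma>r2 + integral {0..2*pi} (\<lambda>\<tau>. a^2 * \<alpha>^2 * \<sigma>w2 /
               (1 - a^2 * (1 - \<beta> * (2 - 2 * cos \<tau>) - \<alpha>)^2)) / (2 * pi)"
proof -
  define g where "g = (\<lambda>\<tau>. a^2 * \<alpha>^2 * \<sigma>w2 / (1 - a^2 * (1 - \<beta> * (2 - 2 * cos \<tau>) - \<alpha>)^2))"
  have "a^2 * (1 - \<beta> * (2 - 2 * cos \<tau>) - \<alpha>)^2 < 1" for \<tau>
  proof (rule square_lt_one_if_between[OF _ _ bound])
    have "0 \<le> 2 - 2 * cos \<tau>" "2 - 2 * cos \<tau> \<le> 4" using cos_le_one[of \<tau>] cos_ge_minus_one[of \<tau>] by linarith+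
    then show "1 - 4 * \<beta> - \<alpha> \<le> 1 - \<beta> * (2 - 2 * cos \<tau>) - \<alpha>" "1 - \<beta> * (2 - 2 * cos \<tau>) - \<alpha> \<le> 1 - \<alpha>"
      using \<open>0 \<le> \<beta>\<close> mult_left_mono[of "2 - 2 * cos \<tau>" 4 \<beta>] by auto
  qed
  then have "continuous_on {0..2*pi} g" unfolding g_def by (intro continuous_intros) (auto simp: less_le)
  then have lim: "(\<lambda>N. R_MSD a \<alpha> \<sigma>r2 + 2 * pi / real N * (\<Sum>k<N. g (2 * pi * real k / real N)) / (2 * pi))
      \<longlonglongrightarrow> R_MSD a \<alpha> \<sigma>r2 + integral {0..2*pi} g / (2 * pi)"
    by (intro tendsto_intros riemann_sum_tendsto_integral) auto
  have eq: "MSD_hat a \<alpha> \<sigma>r2 \<sigma>w2 (1\<^sub>m N - \<beta> \<cdot>\<^sub>m L_C N)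
      = R_MSD a \<alpha> \<sigma>r2 + 2 * pi / real N * (\<Sum>k<N. g (2 * pi * real k / real N)) / (2 * pi)"
    if N: "3 \<le> N" for N
    unfolding MSD_hat_def sum_eigvals[OF char_poly_cycle[OF N]] g_def by simp
  have "\<forall>\<^sub>F N in sequentially.
      R_MSD a \<alpha> \<sigma>r2 + 2 * pi / real N * (\<Sum>k<N. g (2 * pi * real k / real N)) / (2 * pi)
      = MSD_hat a \<alpha> \<sigma>r2 \<sigma>w2 (1\<^sub>m N - \<beta> \<cdot>\<^sub>m L_C N)"
    using eventually_ge_at_top[of 3] by eventually_elim (rule eq[symmetric])
  with lim show ?thesis unfolding g_def by (rule Lim_transform_eventually)
qed

theorem corollary1:
  fixes a \<alpha> \<sigma>r2 \<sigma>w2 :: real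
  assumes "0 < \<alpha>" and "\<alpha> \<le> 1" and "0 \<le> \<sigma>r2" and "0 \<le> \<sigma>w2"
  shows
   "(\<bar>a\<bar> * (1 - \<alpha>) < 1 \<longrightarrow>
      (\<lambda>N. MSD_hat a \<alpha> \<sigma>r2 \<sigma>w2 (1\<^sub>m N - ((1 - \<alpha>) / real N) \<cdot>\<^sub>m L_K N))
        \<longlonglongrightarrow> R_MSD a \<alpha> \<sigma>r2 + a^2 * \<alpha>^2 * \<sigma>w2)
  \<and> (\<bar>a\<bar> * (1 - \<alpha>) < 1 \<longrightarrow>
      (\<lambda>N. MSD_hat a \<alpha> \<sigma>r2 \<sigma>w2 (1\<^sub>m N - ((1 - \<alpha>) / real N) \<cdot>\<^sub>m L_S N))
        \<longlonglongrightarrow> R_MSD a \<alpha> \<sigma>r2 + a^2 * \<alpha>^2 * \<sigma>w2 / (1 - a^2 * (1 - \<alpha>)^2))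
  \<and> (\<forall>\<beta>::real. 0 < \<beta> \<and> \<beta> < 1/2 \<and> \<bar>a\<bar> * max (1 - \<alpha>) \<bar>1 - 4 * \<beta> - \<alpha>\<bar> < 1 \<longrightarrow>
      (\<lambda>N. MSD_hat a \<alpha> \<sigma>r2 \<sigma>w2 (1\<^sub>m N - \<beta> \<cdot>\<^sub>m L_C N))
        \<longlonglongrightarrow> R_MSD a \<alpha> \<sigma>r2 +
            integral {0..2*pi} (\<lambda>\<tau>. a^2 * \<alpha>^2 * \<sigma>w2 /
               (1 - a^2 * (1 - \<beta> * (2 - 2 * cos \<tau>) - \<alpha>)^2)) / (2 * pi))
  \<and> (\<bar>a\<bar> * max (1 - \<alpha>) \<alpha> < 1 \<longrightarrow>
      (\<lambda>N. MSD_tilde a \<alpha> \<sigma>r2 \<sigma>w2 (1\<^sub>m N - (1 / real N) \<cdot>\<^sub>m L_K N))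
        \<longlonglongrightarrow> R_MSD a \<alpha> \<sigma>r2)"
  using MSD_hat_complete_tendsto MSD_hat_star_tendsto[OF _ \<open>\<alpha> \<le> 1\<close>]
    MSD_hat_cycle_tendsto[OF less_imp_le] MSD_tilde_complete_tendsto
  by blast

end
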